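(* Let $X$ be a $k$-dimensional simplicial complex with $n$ vertices and complete $(k-1)$-skeleton. Fix $d>0$ and $f\ge0$ such that for every $F\in X_{k-2}$, $$\sum_{v\in V\setminus F}\big(\deg_{\mathrm{lk}F}(v)-d\big)^2\le f^2(n-k+1).$$ Then (i) $|\langle A_{k-1}b,b\rangle-d|\le kf$ for all $b\in B^{k-1}(X)$ with $\|b\|=1$, and (ii) $|\langle A_{k-1}b,z\rangle|\le kf$ for all unit $b\in B^{k-1}(X)$ and unit $z$ orthogonal to $B^{k-1}(X)$.
   Context: Standard Euclidean inner products and norms. Complexes have linearly ordered vertex sets $V$; $X_i$ is the set of $i$-faces; $[F:G]$ is the oriented incidence number ($(-1)^j$ if $F\setminus G=\{v_j\}$, $F=\{v_0<\dots<v_i\}$; $0$ if $G\not\subseteq F$). Complete $(k-1)$-skeleton: every vertex set of size at most $k$ is a face. $B^{k-1}(X)=\operatorname{im}\delta_{k-2}$, $(\delta f)(H)=\sum_G[H:G]f(G)$. $A_{k-1}(X)$ is the $X_{k-1}\times X_{k-1}$ matrix with entry $[F:F\cap G][G:F\cap G]$ if $|F\cap G|=k-1$ and $F\cup G\in X_k$, else $0$. For $F\in X_{k-2}$, $\mathrm{lk}\,F$ is the graph on $V\setminus F$ with edges $\{u,v\}$ such that $F\cup\{u,v\}\in X_k$. *)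

theory Defs
  imports Main "HOL-Library.Sum_of_Squares"
begin

text \<open>Simplicial complexes on a finite linearly ordered vertex set V, faces are vertex sets.
  A face of dimension i has i+1 vertices.\<close>

definition simplicial_complex :: "'a set \<Rightarrow> 'a set set \<Rightarrow> bool" where
  "simplicial_complex V X \<longleftrightarrow> finite V \<and> X \<subseteq> Pow V \<and>
     (\<forall>F\<in>X. \<forall>G. G \<subseteq> F \<longrightarrow> G \<in> X)"

text \<open>X_i, the i-faces (i+1 vertices); here indexed by the number of vertices.\<close>
definition faces_card :: "'a set set \<Rightarrow> nat \<Rightarrow> 'a set set" where
  "faces_card X m = {F\<in>X. card F = m}"

definition complex_dim :: "'a set set \<Rightarrow> nat \<Rightarrow> bool" where
  "complex_dim X k \<longleftrightarrow> (\<forall>F\<in>X. card F \<le> k + 1) \<and> (\<exists>F\<in>X. card F = k + 1)"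

definition complete_skeleton :: "'a set \<Rightarrow> 'a set set \<Rightarrow> nat \<Rightarrow> bool" where
  "complete_skeleton V X k \<longleftrightarrow> (\<forall>F. F \<subseteq> V \<and> card F \<le> k \<longrightarrow> F \<in> X)"

definition incidence :: "'a::linorder set \<Rightarrow> 'a set \<Rightarrow> real" where
  "incidence F G = (if G \<subseteq> F \<and> card (F - G) = 1
      then (-1) ^ card {u\<in>F. u < the_elem (F - G)} else 0)"

definition cobdry :: "'a::linorder set set \<Rightarrow> nat \<Rightarrow> ('a set \<Rightarrow> real) \<Rightarrow> 'a set \<Rightarrow> real" where
  "cobdry X m g H = (\<Sum>G\<in>faces_card X m. incidence H G * g G)"

text \<open>B^{k-1}(X) = image of \<delta>_{k-2}, cochains on X_{k-1} (k vertices).\<close>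
definition coboundaries :: "'a::linorder set set \<Rightarrow> nat \<Rightarrow> ('a set \<Rightarrow> real) set" where
  "coboundaries X k = {b. \<exists>g. \<forall>H\<in>faces_card X k. b H = cobdry X (k - 1) g H}"

definition cinner :: "'a set set \<Rightarrow> nat \<Rightarrow> ('a set \<Rightarrow> real) \<Rightarrow> ('a set \<Rightarrow> real) \<Rightarrow> real" where
  "cinner X k f g = (\<Sum>F\<in>faces_card X k. f F * g F)"

definition cnorm :: "'a set set \<Rightarrow> nat \<Rightarrow> ('a set \<Rightarrow> real) \<Rightarrow> real" where
  "cnorm X k f = sqrt (cinner X k f f)"

definition adj_entry :: "'a::linorder set set \<Rightarrow> nat \<Rightarrow> 'a set \<Rightarrow> 'a set \<Rightarrow> real" where
  "adj_entry X k F G = (if card (F \<inter> G) = k - 1 \<and> F \<union> G \<in> faces_card X (k + 1)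
      then incidence F (F \<inter> G) * incidence G (F \<inter> G) else 0)"

definition adj_apply :: "'a::linorder set set \<Rightarrow> nat \<Rightarrow> ('a set \<Rightarrow> real) \<Rightarrow> 'a set \<Rightarrow> real" where
  "adj_apply X k b F = (\<Sum>G\<in>faces_card X k. adj_entry X k F G * b G)"

definition link_deg :: "'a set \<Rightarrow> 'a set set \<Rightarrow> nat \<Rightarrow> 'a set \<Rightarrow> 'a \<Rightarrow> nat" where
  "link_deg V X k F v = card {u\<in>V - F. u \<noteq> v \<and> F \<union> {u, v} \<in> faces_card X (k + 1)}"

end

theory Submission
  imports Defs "HOL-Analysis.Convex"
begin

text \<open>With a complete (k-1)-skeleton, \<delta> acts as on the full simplex on V, and the vanishing of
  \<delta>\<delta> makes the off-diagonal entries of A cancel on coboundaries: (A b) F = deg F * b F, where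
  deg F counts the k-faces containing F. Hence <A b, b> - d and <A b, z> (for z orthogonal to the
  coboundaries) are sums of (deg F - d) b F^2 and (deg F - d) b F z F. The same cancellation gives
  \<delta>\<delta>* = n on coboundaries, so b = \<delta> g with |g|^2 = |b|^2 / n. Cauchy-Schwarz gives
  b F^2 \<le> k \<Sum>x\<in>F g(F - x)^2, which moves the weights deg F - d onto the links of the
  (k-2)-faces, whose n - k + 1 vertices carry the assumed bound.\<close>

definition insertion_sign :: "'a::linorder set \<Rightarrow> 'a \<Rightarrow> real" where
  "insertion_sign G x = (-1) ^ card {u\<in>G. u < x}"

lemma insertion_sign_square: "insertion_sign G x * insertion_sign G x = 1"
  by (simp add: insertion_sign_def flip: power_add)

lemma insertion_sign_power2: "(insertion_sign G x)\<^sup>2 = 1"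
  unfolding power2_eq_square by (rule insertion_sign_square)

lemma incidence_insert:
  assumes "finite G" "x \<notin> G"
  shows "incidence (insert x G) G = insertion_sign G x"
proof -
  have "insert x G - G = {x}" using assms by auto
  moreover have "{u\<in>insert x G. u < x} = {u\<in>G. u < x}" by auto
  ultimately show ?thesis unfolding incidence_def insertion_sign_def by auto
qed

lemma incidence_remove:
  assumes "finite F" "x \<in> F"
  shows "incidence F (F - {x}) = insertion_sign (F - {x}) x"
  using incidence_insert[of "F - {x}" x] assms by (simp add: insert_absorb)

lemma insertion_sign_insert_swap:
  assumes "finite G" "x \<notin> G" "y \<notin> G" "x \<noteq> y"
  shows "insertion_sign G x * insertion_sign (insert x G) y
       = - (insertion_sign G y * insertion_sign (insert y G) x)"
proof (cases "x < y")
  case True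
  have "{u\<in>insert x G. u < y} = insert x {u\<in>G. u < y}"
    and "{u\<in>insert y G. u < x} = {u\<in>G. u < x}" using True by auto
  then show ?thesis using assms by (simp add: insertion_sign_def card_insert_if)
next
  case False
  then have "{u\<in>insert y G. u < x} = insert y {u\<in>G. u < x}"
    and "{u\<in>insert x G. u < y} = {u\<in>G. u < y}" using assms by auto
  then show ?thesis using assms by (simp add: insertion_sign_def card_insert_if)
qed

lemma insertion_sign_exchange:
  assumes "finite F" "x \<in> F" "y \<notin> F"
  shows "insertion_sign (F - {x}) x * insertion_sign (F - {x}) y
       = - (insertion_sign F y * insertion_sign (insert y (F - {x})) x)"
proof -
  define G where "G = F - {x}"
  have G: "finite G" "x \<notin> G" "y \<notin> G" "x \<noteq> y" and F: "insert x G = F"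
    using assms by (auto simp: G_def)
  let ?a = "insertion_sign G x" and ?b = "insertion_sign G y"
    and ?c = "insertion_sign F y" and ?d = "insertion_sign (insert y G) x"
  have swap: "?a * ?c = - (?b * ?d)"
    using insertion_sign_insert_swap[OF G] by (simp only: F)
  have "?a * ?b = (?a * ?c) * ?b * ?c"
    by (simp add: mult.assoc mult.left_commute[of ?c] insertion_sign_square)
  also have "\<dots> = - ((?b * ?b) * (?c * ?d))"
    by (simp only: swap) (simp add: algebra_simps)
  finally show ?thesis by (simp add: insertion_sign_square G_def)
qed

definition subsets_card :: "'a set \<Rightarrow> nat \<Rightarrow> 'a set set" where
  "subsets_card V m = {F. F \<subseteq> V \<and> card F = m}"

lemma finite_subsets_card: "finite V \<Longrightarrow> finite (subsets_card V m)"
  unfolding subsets_card_def by (rule finite_subset[of _ "Pow V"]) auto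

lemma finite_of_subsets_card: "finite V \<Longrightarrow> F \<in> subsets_card V m \<Longrightarrow> finite F"
  by (auto simp: subsets_card_def dest: rev_finite_subset)

lemma real_card_complement_subsets_card:
  assumes "finite V" "k \<ge> 1" "G \<in> subsets_card V (k - 1)"
  shows "real (card (V - G)) = real (card V) - real k + 1"
proof -
  have "G \<subseteq> V" "card G = k - 1" using assms by (auto simp: subsets_card_def)
  moreover have "card G \<le> card V" using \<open>G \<subseteq> V\<close> assms(1) card_mono by blast
  ultimately show ?thesis
    using assms by (simp add: card_Diff_subset of_nat_diff rev_finite_subset)
qed

lemma sum_subsets_card_facets:
  assumes "finite V" "k \<ge> 1"
  shows "(\<Sum>F\<in>subsets_card V k. \<Sum>x\<in>F. \<phi> F x)
       = (\<Sum>G\<in>subsets_card V (k - 1). \<Sum>x\<in>V - G. \<phi> (insert x G) x)"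
proof -
  have fin: "finite (subsets_card V m)" for m using assms finite_subsets_card by blast
  have "(\<Sum>F\<in>subsets_card V k. \<Sum>x\<in>F. \<phi> F x) = (\<Sum>(F, x)\<in>(SIGMA F:subsets_card V k. F). \<phi> F x)"
    using fin assms by (intro sum.Sigma) (auto dest: finite_of_subsets_card)
  also have "\<dots> = (\<Sum>(G, x)\<in>(SIGMA G:subsets_card V (k - 1). V - G). \<phi> (insert x G) x)"
    by (rule sum.reindex_bij_witness[where j = "\<lambda>(F, x). (F - {x}, x)"
          and i = "\<lambda>(G, x). (insert x G, x)"])
       (use assms in \<open>auto simp: subsets_card_def card_insert_if insert_absorb
          dest: rev_finite_subset[OF assms(1)]\<close>)
  also have "\<dots> = (\<Sum>G\<in>subsets_card V (k - 1). \<Sum>x\<in>V - G. \<phi> (insert x G) x)"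
    using fin assms by (intro sum.Sigma[symmetric]) auto
  finally show ?thesis .
qed

text \<open>\<delta> and \<delta>* on the full simplex with vertex set V; with a complete skeleton, \<delta> is cobdry.\<close>
definition full_cobdry :: "('a::linorder set \<Rightarrow> real) \<Rightarrow> 'a set \<Rightarrow> real" where
  "full_cobdry g F = (\<Sum>x\<in>F. insertion_sign (F - {x}) x * g (F - {x}))"

definition full_cobdry_adj :: "'a::linorder set \<Rightarrow> ('a set \<Rightarrow> real) \<Rightarrow> 'a set \<Rightarrow> real" where
  "full_cobdry_adj V b G = (\<Sum>x\<in>V - G. insertion_sign G x * b (insert x G))"

lemma full_cobdry_scale: "full_cobdry (\<lambda>G. c * g G) F = c * full_cobdry g F"
  by (simp add: full_cobdry_def sum_distrib_left algebra_simps)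

text \<open>The terms cancel in pairs: removing z and then w from H carries the opposite sign
  of removing w and then z.\<close>
lemma full_cobdry_full_cobdry_eq_0:
  assumes "finite H"
  shows "full_cobdry (full_cobdry g) H = 0"
proof -
  define c where "c = (\<lambda>(z, w). insertion_sign (H - {z}) z
      * (insertion_sign (H - {z} - {w}) w * g (H - {z} - {w})))"
  define S where "S = (SIGMA z:H. H - {z})"
  have "full_cobdry (full_cobdry g) H = (\<Sum>z\<in>H. \<Sum>w\<in>H - {z}. c (z, w))"
    by (simp add: full_cobdry_def c_def sum_distrib_left)
  also have "\<dots> = sum c S"
    using sum.Sigma[of H "\<lambda>z. H - {z}" "\<lambda>z w. c (z, w)"] assms by (simp add: S_def)
  finally have cS: "full_cobdry (full_cobdry g) H = sum c S" .
  have anti: "c (w, z) = - c (z, w)" if "(z, w) \<in> S" for z w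
  proof -
    define G where "G = H - {z, w}"
    have zw: "z \<in> H" "w \<in> H" "z \<noteq> w" using that by (auto simp: S_def)
    have H: "H - {z} = insert w G" "H - {w} = insert z G"
      "insert w G - {w} = G" "insert z G - {z} = G"
      using zw by (auto simp: G_def)
    have "insertion_sign G w * insertion_sign (insert w G) z
        = - (insertion_sign G z * insertion_sign (insert z G) w)"
      using insertion_sign_insert_swap[of G w z] zw assms by (auto simp: G_def)
    then show ?thesis by (simp add: c_def H algebra_simps)
  qed
  have "sum c S = sum (\<lambda>(z, w). c (w, z)) S"
    by (rule sum.reindex_bij_witness[where i = "\<lambda>(z, w). (w, z)" and j = "\<lambda>(z, w). (w, z)"])
       (auto simp: S_def)
  also have "\<dots> = - sum c S"
    by (simp add: anti sum_negf[symmetric] case_prod_beta cong: sum.cong)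
  finally show ?thesis using cS by simp
qed

text \<open>For a coboundary, swapping a vertex x of F for a fixed outside vertex y and summing over x
  returns the value at F: this is the vanishing of the coboundary on insert y F.\<close>
lemma full_cobdry_exchange:
  assumes "finite F" "y \<notin> F"
  shows "(\<Sum>x\<in>F. insertion_sign (F - {x}) x * insertion_sign (F - {x}) y
           * full_cobdry g (insert y (F - {x}))) = full_cobdry g F"
proof -
  let ?s = "\<lambda>x. insertion_sign (insert y (F - {x})) x * full_cobdry g (insert y (F - {x}))"
  have H: "insert y F - {y} = F" "insert y F - {x} = insert y (F - {x})" if "x \<in> F" for x
    using assms that by auto
  have "0 = full_cobdry (full_cobdry g) (insert y F)"
    using assms by (simp add: full_cobdry_full_cobdry_eq_0)
  also have "\<dots> = insertion_sign F y * full_cobdry g F + (\<Sum>x\<in>F. ?s x)"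
    using assms by (simp add: full_cobdry_def[of "full_cobdry g"] H cong: sum.cong)
  finally have s: "(\<Sum>x\<in>F. ?s x) = - (insertion_sign F y * full_cobdry g F)" by simp
  have "(\<Sum>x\<in>F. insertion_sign (F - {x}) x * insertion_sign (F - {x}) y
           * full_cobdry g (insert y (F - {x}))) = - insertion_sign F y * (\<Sum>x\<in>F. ?s x)"
    by (simp add: sum_distrib_left insertion_sign_exchange[OF assms(1) _ assms(2)] mult.assoc
        cong: sum.cong)
  also have "\<dots> = full_cobdry g F"
    using s by (simp add: mult.assoc[symmetric] insertion_sign_square)
  finally show ?thesis .
qed

lemma sum_full_cobdry_adj_mult:
  assumes "finite V" "k \<ge> 1"
  shows "(\<Sum>G\<in>subsets_card V (k - 1). full_cobdry_adj V b G * h G)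
       = (\<Sum>F\<in>subsets_card V k. b F * full_cobdry h F)"
proof -
  have "(\<Sum>F\<in>subsets_card V k. b F * full_cobdry h F)
      = (\<Sum>F\<in>subsets_card V k. \<Sum>x\<in>F. b F * insertion_sign (F - {x}) x * h (F - {x}))"
    by (simp add: full_cobdry_def sum_distrib_left mult.assoc)
  also have "\<dots> = (\<Sum>G\<in>subsets_card V (k - 1). \<Sum>x\<in>V - G.
      b (insert x G) * insertion_sign (insert x G - {x}) x * h (insert x G - {x}))"
    by (rule sum_subsets_card_facets[OF assms])
  also have "\<dots> = (\<Sum>G\<in>subsets_card V (k - 1). full_cobdry_adj V b G * h G)"
    by (auto simp: full_cobdry_adj_def sum_distrib_right insert_Diff_if subsets_card_def
        intro!: sum.cong)
  finally show ?thesis by simp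
qed

text \<open>On the complete simplex, \<delta>\<delta>* acts on coboundaries as multiplication by the number of
  vertices: the k terms x = y give b F, the other terms give b F once per y \<notin> F.\<close>
lemma full_cobdry_full_cobdry_adj:
  assumes "finite V" "F \<in> subsets_card V k"
  shows "full_cobdry (full_cobdry_adj V (full_cobdry g)) F = real (card V) * full_cobdry g F"
proof -
  let ?b = "full_cobdry g"
  let ?t = "\<lambda>x y. insertion_sign (F - {x}) x * insertion_sign (F - {x}) y * ?b (insert y (F - {x}))"
  have fF: "finite F" and FV: "F \<subseteq> V" "card F = k"
    using assms by (auto simp: subsets_card_def dest: rev_finite_subset)
  have "full_cobdry (full_cobdry_adj V ?b) F = (\<Sum>x\<in>F. ?b F + (\<Sum>y\<in>V - F. ?t x y))"
    unfolding full_cobdry_def[of "full_cobdry_adj V ?b"]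
  proof (intro sum.cong refl)
    fix x assume x: "x \<in> F"
    have "V - (F - {x}) = insert x (V - F)" using x FV by auto
    then have "full_cobdry_adj V ?b (F - {x}) = insertion_sign (F - {x}) x * ?b F
        + (\<Sum>y\<in>V - F. insertion_sign (F - {x}) y * ?b (insert y (F - {x})))"
      unfolding full_cobdry_adj_def using assms(1) x by (simp add: insert_absorb)
    then show "insertion_sign (F - {x}) x * full_cobdry_adj V ?b (F - {x})
        = ?b F + (\<Sum>y\<in>V - F. ?t x y)"
      by (simp add: ring_distribs sum_distrib_left mult.assoc[symmetric] insertion_sign_square)
  qed
  also have "\<dots> = real k * ?b F + (\<Sum>y\<in>V - F. \<Sum>x\<in>F. ?t x y)"
    by (simp add: sum.distrib FV sum.swap[of _ F "V - F"])
  also have "\<dots> = real k * ?b F + real (card (V - F)) * ?b F"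
    using full_cobdry_exchange[OF fF] by simp
  also have "\<dots> = real (card V) * ?b F"
    using FV assms(1) card_mono[OF assms(1) FV(1)]
    by (simp add: card_Diff_subset fF of_nat_diff algebra_simps)
  finally show ?thesis .
qed

lemma sum_square_full_cobdry_adj:
  assumes "finite V" "k \<ge> 1"
  shows "(\<Sum>G\<in>subsets_card V (k - 1). (full_cobdry_adj V (full_cobdry g) G)\<^sup>2)
       = real (card V) * (\<Sum>F\<in>subsets_card V k. (full_cobdry g F)\<^sup>2)"
proof -
  let ?b = "full_cobdry g"
  have "(\<Sum>G\<in>subsets_card V (k - 1). (full_cobdry_adj V ?b G)\<^sup>2)
      = (\<Sum>F\<in>subsets_card V k. ?b F * full_cobdry (full_cobdry_adj V ?b) F)"
    using sum_full_cobdry_adj_mult[OF assms, of ?b "full_cobdry_adj V ?b"]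
    by (simp add: power2_eq_square)
  also have "\<dots> = (\<Sum>F\<in>subsets_card V k. real (card V) * (?b F)\<^sup>2)"
    by (intro sum.cong refl)
       (simp add: full_cobdry_full_cobdry_adj[OF assms(1)] power2_eq_square)
  finally show ?thesis by (simp add: sum_distrib_left)
qed

lemma faces_card_complete:
  assumes "simplicial_complex V X" "complete_skeleton V X k" "m \<le> k"
  shows "faces_card X m = subsets_card V m"
  using assms
  by (auto simp: simplicial_complex_def complete_skeleton_def faces_card_def subsets_card_def)

lemma sum_incidence_eq_full_cobdry:
  assumes "finite V" "k \<ge> 1" "F \<in> subsets_card V k"
  shows "(\<Sum>G\<in>subsets_card V (k - 1). incidence F G * g G) = full_cobdry g F"
proof -
  have fF: "finite F" using assms finite_of_subsets_card by blast
  have inj: "inj_on (\<lambda>x. F - {x}) F" by (auto simp: inj_on_def)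
  have "full_cobdry g F = (\<Sum>x\<in>F. incidence F (F - {x}) * g (F - {x}))"
    unfolding full_cobdry_def using fF by (simp add: incidence_remove)
  also have "\<dots> = (\<Sum>G\<in>(\<lambda>x. F - {x}) ` F. incidence F G * g G)"
    by (simp add: sum.reindex[OF inj])
  also have "\<dots> = (\<Sum>G\<in>subsets_card V (k - 1). incidence F G * g G)"
  proof (rule sum.mono_neutral_left)
    show "finite (subsets_card V (k - 1))" using assms finite_subsets_card by blast
    show "(\<lambda>x. F - {x}) ` F \<subseteq> subsets_card V (k - 1)"
      using assms fF by (auto simp: subsets_card_def)
    have "incidence F G = 0" if "G \<notin> (\<lambda>x. F - {x}) ` F" for G
      using that by (auto simp: incidence_def card_Suc_eq)
    then show "\<forall>G\<in>subsets_card V (k - 1) - (\<lambda>x. F - {x}) ` F. incidence F G * g G = 0"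
      by simp
  qed
  finally show ?thesis by simp
qed

definition up_degree :: "'a set set \<Rightarrow> 'a set \<Rightarrow> 'a set \<Rightarrow> nat" where
  "up_degree X V F = card {u\<in>V - F. insert u F \<in> X}"

lemma link_deg_eq_up_degree:
  assumes "finite V" "k \<ge> 1" "G \<in> subsets_card V (k - 1)" "x \<in> V - G"
  shows "link_deg V X k G x = up_degree X V (insert x G)"
proof -
  have "finite G" "card G = k - 1"
    using assms finite_of_subsets_card by (auto simp: subsets_card_def)
  then have "u \<in> V - insert x G \<Longrightarrow> card (insert u (insert x G)) = k + 1" for u
    using assms by auto
  then have "{u\<in>V - G. u \<noteq> x \<and> G \<union> {u, x} \<in> faces_card X (k + 1)}
      = {u\<in>V - insert x G. insert u (insert x G) \<in> X}"
    by (auto simp: faces_card_def insert_commute)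
  then show ?thesis by (simp add: link_deg_def up_degree_def)
qed

lemma sum_up_degree_deviation_le:
  assumes "simplicial_complex V X" "complete_skeleton V X k" "k \<ge> 1"
    and "\<forall>F\<in>faces_card X (k - 1). (\<Sum>v\<in>V - F. (real (link_deg V X k F v) - d)\<^sup>2) \<le> c"
  shows "\<forall>G\<in>subsets_card V (k - 1). (\<Sum>x\<in>V - G. (real (up_degree X V (insert x G)) - d)\<^sup>2) \<le> c"
proof
  fix G assume G: "G \<in> subsets_card V (k - 1)"
  have "finite V" using assms(1) by (simp add: simplicial_complex_def)
  then have "(\<Sum>x\<in>V - G. (real (up_degree X V (insert x G)) - d)\<^sup>2)
      = (\<Sum>v\<in>V - G. (real (link_deg V X k G v) - d)\<^sup>2)"
    using link_deg_eq_up_degree[OF _ assms(3) G] by simp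
  also have "\<dots> \<le> c" using assms(4) G faces_card_complete[OF assms(1,2), of "k - 1"] by simp
  finally show "(\<Sum>x\<in>V - G. (real (up_degree X V (insert x G)) - d)\<^sup>2) \<le> c" .
qed

lemma adj_entry_exchange:
  assumes "finite F" "card F = k" "x \<in> F" "y \<notin> F"
  shows "adj_entry X k F (insert y (F - {x}))
       = (if insert y F \<in> X then insertion_sign (F - {x}) x * insertion_sign (F - {x}) y else 0)"
proof -
  have "F \<inter> insert y (F - {x}) = F - {x}" "F \<union> insert y (F - {x}) = insert y F"
    using assms by auto
  moreover have "card (F - {x}) = k - 1" "card (insert y F) = k + 1" using assms by auto
  moreover have "incidence (insert y (F - {x})) (F - {x}) = insertion_sign (F - {x}) y"
    using assms by (simp add: incidence_insert)
  ultimately show ?thesis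
    using assms by (simp add: adj_entry_def incidence_remove faces_card_def)
qed

lemma adj_entry_nonzero:
  assumes "adj_entry X k F G \<noteq> 0" "finite F" "finite G" "card F = k" "card G = k" "k \<ge> 1"
  obtains x y where "x \<in> F" "y \<in> G - F" "G = insert y (F - {x})"
proof -
  have ci: "card (F \<inter> G) = k - 1" using assms(1) by (auto simp: adj_entry_def split: if_splits)
  have "card (F - G) = 1" using card_Diff_subset_Int[of F G] assms ci by simp
  then obtain x where x: "F - G = {x}" by (auto simp: card_Suc_eq)
  have "card (G - F) = 1" using card_Diff_subset_Int[of G F] assms ci by (simp add: Int_commute)
  then obtain y where y: "G - F = {y}" by (auto simp: card_Suc_eq)
  have "G = insert y (F - {x})" using x y by blast
  with x y show thesis using that by blast
qed

lemma inj_on_exchange: "inj_on (\<lambda>(x, y). insert y (F - {x})) (F \<times> - F)"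
proof (rule inj_onI, clarify)
  fix x y x' y' assume "x \<in> F" "x' \<in> F" "y \<notin> F" "y' \<notin> F"
    and e: "insert y (F - {x}) = insert y' (F - {x'})"
  then have "y = y'" by blast
  moreover have "x = x'"
  proof (rule ccontr)
    assume "x \<noteq> x'"
    then have "x' \<in> insert y (F - {x})" using \<open>x' \<in> F\<close> by simp
    then show False using e \<open>y' \<notin> F\<close> \<open>x' \<in> F\<close> by auto
  qed
  ultimately show "x = x' \<and> y = y'" by simp
qed

lemma sum_adj_entry_eq_sum_exchanges:
  assumes "finite V" "k \<ge> 1" "F \<in> subsets_card V k"
  shows "(\<Sum>G\<in>subsets_card V k. adj_entry X k F G * b G)
       = (\<Sum>x\<in>F. \<Sum>y\<in>V - F. adj_entry X k F (insert y (F - {x})) * b (insert y (F - {x})))"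
proof -
  let ?e = "\<lambda>(x, y). insert y (F - {x})"
  let ?P = "F \<times> (V - F)"
  have fF: "finite F" using assms(1,3) by (rule finite_of_subsets_card)
  have FV: "F \<subseteq> V" "card F = k" using assms(3) by (auto simp: subsets_card_def)
  have inj: "inj_on ?e ?P" by (rule inj_on_subset[OF inj_on_exchange]) auto
  have "(\<Sum>G\<in>subsets_card V k. adj_entry X k F G * b G) = (\<Sum>G\<in>?e ` ?P. adj_entry X k F G * b G)"
  proof (rule sum.mono_neutral_right)
    show "finite (subsets_card V k)" using assms finite_subsets_card by blast
    show "?e ` ?P \<subseteq> subsets_card V k"
      using FV fF assms(2) by (auto simp: subsets_card_def card_insert_if)
    show "\<forall>G\<in>subsets_card V k - ?e ` ?P. adj_entry X k F G * b G = 0"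
    proof
      fix G assume G: "G \<in> subsets_card V k - ?e ` ?P"
      have G': "finite G" "card G = k" "G \<subseteq> V"
        using G assms(1) finite_of_subsets_card by (auto simp: subsets_card_def)
      have "adj_entry X k F G = 0"
      proof (rule ccontr)
        assume "adj_entry X k F G \<noteq> 0"
        then obtain x y where "x \<in> F" "y \<in> G - F" "G = insert y (F - {x})"
          using adj_entry_nonzero fF FV(2) G' assms(2) by metis
        then have "G \<in> ?e ` ?P" using G' by force
        with G show False by blast
      qed
      then show "adj_entry X k F G * b G = 0" by simp
    qed
  qed
  also have "\<dots> = (\<Sum>x\<in>F. \<Sum>y\<in>V - F.
      adj_entry X k F (insert y (F - {x})) * b (insert y (F - {x})))"
    by (subst sum.reindex[OF inj]) (simp add: sum.cartesian_product case_prod_unfold)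
  finally show ?thesis .
qed

text \<open>On a coboundary, A acts diagonally: the entries of row F are the exchanges of a vertex of F
  for a vertex y with insert y F \<in> X, and for each such y they sum to b F.\<close>
lemma adj_apply_coboundary:
  assumes "finite V" "k \<ge> 1" "faces_card X k = subsets_card V k" "F \<in> subsets_card V k"
    and b: "\<forall>G\<in>subsets_card V k. b G = full_cobdry g G"
  shows "adj_apply X k b F = real (up_degree X V F) * b F"
proof -
  have fF: "finite F" using assms(1,4) by (rule finite_of_subsets_card)
  have FV: "F \<subseteq> V" "card F = k" using assms(4) by (auto simp: subsets_card_def)
  have exchange_in: "insert y (F - {x}) \<in> subsets_card V k" if "x \<in> F" "y \<in> V - F" for x y
    using that FV fF assms(2) by (auto simp: subsets_card_def card_insert_if)
  have "adj_apply X k b F = (\<Sum>x\<in>F. \<Sum>y\<in>V - F.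
      adj_entry X k F (insert y (F - {x})) * b (insert y (F - {x})))"
    unfolding adj_apply_def assms(3) by (rule sum_adj_entry_eq_sum_exchanges[OF assms(1,2,4)])
  also have "\<dots> = (\<Sum>y\<in>V - F. \<Sum>x\<in>F. if insert y F \<in> X then insertion_sign (F - {x}) x
      * insertion_sign (F - {x}) y * full_cobdry g (insert y (F - {x})) else 0)"
    unfolding sum.swap[of _ F]
    using exchange_in b by (auto simp: adj_entry_exchange fF FV intro!: sum.cong)
  also have "\<dots> = (\<Sum>y\<in>V - F. if insert y F \<in> X then b F else 0)"
    by (intro sum.cong refl) (use full_cobdry_exchange[OF fF] b assms(4) in auto)
  also have "\<dots> = real (up_degree X V F) * b F"
    using assms(1) by (simp add: sum.If_cases up_degree_def Int_def)
  finally show ?thesis .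
qed

lemma coboundary_obtain_full_potential:
  assumes "simplicial_complex V X" "complete_skeleton V X k" "k \<ge> 1" "b \<in> coboundaries X k"
  obtains g where "\<forall>F\<in>subsets_card V k. b F = full_cobdry g F"
proof -
  have finV: "finite V" using assms(1) by (simp add: simplicial_complex_def)
  obtain g where g: "\<forall>H\<in>faces_card X k. b H = cobdry X (k - 1) g H"
    using assms(4) by (auto simp: coboundaries_def)
  have "\<forall>F\<in>subsets_card V k. b F = full_cobdry g F"
    using g sum_incidence_eq_full_cobdry[OF finV assms(3)]
    by (simp add: cobdry_def faces_card_complete[OF assms(1,2)])
  then show thesis by (rule that)
qed

lemma cinner_adj_apply_coboundary:
  assumes "simplicial_complex V X" "complete_skeleton V X k" "k \<ge> 1"
    and b: "\<forall>F\<in>subsets_card V k. b F = full_cobdry g F"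
  shows "cinner X k (adj_apply X k b) c = (\<Sum>F\<in>subsets_card V k. real (up_degree X V F) * b F * c F)"
proof -
  have finV: "finite V" using assms(1) by (simp add: simplicial_complex_def)
  have faces: "faces_card X k = subsets_card V k"
    using faces_card_complete[OF assms(1,2)] by simp
  show ?thesis
    unfolding cinner_def faces
    by (intro sum.cong refl) (simp add: adj_apply_coboundary[OF finV assms(3) faces _ b] b)
qed

lemma square_sum_le_card_sum_squares:
  fixes c :: "'b \<Rightarrow> real"
  shows "(\<Sum>x\<in>A. c x)\<^sup>2 \<le> real (card A) * (\<Sum>x\<in>A. (c x)\<^sup>2)"
  using Cauchy_Schwarz_ineq_sum[of "\<lambda>x. 1" c A] by simp

lemma sum_weighted_square_full_cobdry_le:
  assumes "finite V" "k \<ge> 1" "\<forall>F\<in>subsets_card V k. u F \<ge> 0"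
  shows "(\<Sum>F\<in>subsets_card V k. u F * (full_cobdry g F)\<^sup>2)
       \<le> real k * (\<Sum>G\<in>subsets_card V (k - 1). (g G)\<^sup>2 * (\<Sum>x\<in>V - G. u (insert x G)))"
proof -
  have "(\<Sum>F\<in>subsets_card V k. u F * (full_cobdry g F)\<^sup>2)
      \<le> (\<Sum>F\<in>subsets_card V k. u F * (real k * (\<Sum>x\<in>F. (g (F - {x}))\<^sup>2)))"
  proof (rule sum_mono)
    fix F assume F: "F \<in> subsets_card V k"
    have "(full_cobdry g F)\<^sup>2
        \<le> real (card F) * (\<Sum>x\<in>F. (insertion_sign (F - {x}) x * g (F - {x}))\<^sup>2)"
      unfolding full_cobdry_def by (rule square_sum_le_card_sum_squares)
    also have "\<dots> = real k * (\<Sum>x\<in>F. (g (F - {x}))\<^sup>2)"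
      using F by (simp add: subsets_card_def power_mult_distrib insertion_sign_power2)
    finally show "u F * (full_cobdry g F)\<^sup>2 \<le> u F * (real k * (\<Sum>x\<in>F. (g (F - {x}))\<^sup>2))"
      using assms(3) F by (simp add: mult_left_mono)
  qed
  also have "\<dots> = real k * (\<Sum>F\<in>subsets_card V k. \<Sum>x\<in>F. u F * (g (F - {x}))\<^sup>2)"
    by (simp add: sum_distrib_left algebra_simps)
  also have "\<dots> = real k * (\<Sum>G\<in>subsets_card V (k - 1). \<Sum>x\<in>V - G.
      u (insert x G) * (g (insert x G - {x}))\<^sup>2)"
    by (simp add: sum_subsets_card_facets[OF assms(1,2)])
  also have "\<dots> = real k * (\<Sum>G\<in>subsets_card V (k - 1). (g G)\<^sup>2 * (\<Sum>x\<in>V - G. u (insert x G)))"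
    by (auto simp: sum_distrib_left insert_Diff_if mult.commute intro!: sum.cong)
  finally show ?thesis .
qed

text \<open>The potential \<delta>* b / n of b has squared norm |b|^2 / n, while the links of the
  (k - 2)-faces have only n - k + 1 vertices, so the Cauchy-Schwarz loss k in the previous
  lemma is not increased.\<close>
lemma coboundary_weighted_norm_le:
  assumes "finite V" "k \<ge> 1" "a \<ge> 0"
    and b: "\<forall>F\<in>subsets_card V k. b F = full_cobdry g F"
    and u: "\<forall>F\<in>subsets_card V k. u F \<ge> 0"
    and link: "\<forall>G\<in>subsets_card V (k - 1). (\<Sum>x\<in>V - G. u (insert x G)) \<le> a * real (card (V - G))"
  shows "(\<Sum>F\<in>subsets_card V k. u F * (b F)\<^sup>2) \<le> real k * a * (\<Sum>F\<in>subsets_card V k. (b F)\<^sup>2)"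
proof (cases "subsets_card V k = {}")
  case False
  define n where "n = real (card V)"
  define m where "m = n - real k + 1"
  define h where "h = (\<lambda>G. (1 / n) * full_cobdry_adj V (full_cobdry g) G)"
  obtain F0 where "F0 \<subseteq> V" "card F0 = k" using False by (auto simp: subsets_card_def)
  then have nk: "n \<ge> real k" using card_mono[OF assms(1)] by (auto simp: n_def)
  have h_potential: "full_cobdry h F = b F" if "F \<in> subsets_card V k" for F
  proof -
    have "full_cobdry h F = (1 / n) * full_cobdry (full_cobdry_adj V (full_cobdry g)) F"
      unfolding h_def by (rule full_cobdry_scale)
    also have "\<dots> = full_cobdry g F"
      using full_cobdry_full_cobdry_adj[OF assms(1) that] nk assms(2) by (simp add: n_def)
    finally show ?thesis using b that by simp
  qed
  have h_norm: "(\<Sum>G\<in>subsets_card V (k - 1). (h G)\<^sup>2) = (\<Sum>F\<in>subsets_card V k. (b F)\<^sup>2) / n"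
  proof -
    have "(\<Sum>G\<in>subsets_card V (k - 1). (h G)\<^sup>2)
        = (1 / n)\<^sup>2 * (\<Sum>G\<in>subsets_card V (k - 1). (full_cobdry_adj V (full_cobdry g) G)\<^sup>2)"
      by (simp add: h_def power_mult_distrib sum_distrib_left power_divide)
    also have "\<dots> = (1 / n)\<^sup>2 * (n * (\<Sum>F\<in>subsets_card V k. (b F)\<^sup>2))"
      using sum_square_full_cobdry_adj[OF assms(1,2), of g] b by (simp add: n_def)
    finally show ?thesis using nk assms(2) by (simp add: power2_eq_square)
  qed
  have "(\<Sum>F\<in>subsets_card V k. u F * (b F)\<^sup>2) = (\<Sum>F\<in>subsets_card V k. u F * (full_cobdry h F)\<^sup>2)"
    by (simp add: h_potential)
  also have "\<dots> \<le> real k * (\<Sum>G\<in>subsets_card V (k - 1). (h G)\<^sup>2 * (\<Sum>x\<in>V - G. u (insert x G)))"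
    by (rule sum_weighted_square_full_cobdry_le[OF assms(1,2) u])
  also have "\<dots> \<le> real k * (\<Sum>G\<in>subsets_card V (k - 1). (h G)\<^sup>2 * (a * m))"
    using link real_card_complement_subsets_card[OF assms(1,2)]
    by (intro mult_left_mono sum_mono) (simp_all add: m_def n_def mult_left_mono)
  also have "\<dots> = real k * a * (m / n) * (\<Sum>F\<in>subsets_card V k. (b F)\<^sup>2)"
    by (simp only: sum_distrib_right[symmetric] h_norm) (simp add: algebra_simps)
  also have "\<dots> \<le> real k * a * (\<Sum>F\<in>subsets_card V k. (b F)\<^sup>2)"
  proof (rule mult_right_mono)
    have "m / n \<le> 1" using nk assms(2) by (simp add: m_def)
    then show "real k * a * (m / n) \<le> real k * a"
      using mult_left_mono[of "m / n" 1 "real k * a"] assms(3) by simp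
  qed (simp add: sum_nonneg)
  finally show ?thesis .
qed simp

lemma diagonal_deviation_le:
  assumes "finite V" "k \<ge> 1" "f \<ge> 0"
    and b: "\<forall>F\<in>subsets_card V k. b F = full_cobdry g F"
    and dev: "\<forall>G\<in>subsets_card V (k - 1).
      (\<Sum>x\<in>V - G. (D (insert x G) - d)\<^sup>2) \<le> f\<^sup>2 * (real (card V) - real k + 1)"
  shows "\<bar>(\<Sum>F\<in>subsets_card V k. D F * (b F)\<^sup>2) - d * (\<Sum>F\<in>subsets_card V k. (b F)\<^sup>2)\<bar>
       \<le> real k * f * (\<Sum>F\<in>subsets_card V k. (b F)\<^sup>2)"
proof -
  have link: "(\<Sum>x\<in>V - G. \<bar>D (insert x G) - d\<bar>) \<le> f * real (card (V - G))"
    if G: "G \<in> subsets_card V (k - 1)" for G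
  proof (rule power2_le_imp_le)
    let ?m = "real (card (V - G))"
    have "(\<Sum>x\<in>V - G. \<bar>D (insert x G) - d\<bar>)\<^sup>2 \<le> ?m * (\<Sum>x\<in>V - G. (D (insert x G) - d)\<^sup>2)"
      using square_sum_le_card_sum_squares[of "\<lambda>x. \<bar>D (insert x G) - d\<bar>"] by simp
    also have "\<dots> \<le> ?m * (f\<^sup>2 * ?m)"
      using dev G real_card_complement_subsets_card[OF assms(1,2) G] by (intro mult_left_mono) auto
    finally show "(\<Sum>x\<in>V - G. \<bar>D (insert x G) - d\<bar>)\<^sup>2 \<le> (f * ?m)\<^sup>2"
      by (simp add: power2_eq_square algebra_simps)
  qed (use assms(3) in simp)
  have "\<bar>(\<Sum>F\<in>subsets_card V k. D F * (b F)\<^sup>2) - d * (\<Sum>F\<in>subsets_card V k. (b F)\<^sup>2)\<bar>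
      = \<bar>\<Sum>F\<in>subsets_card V k. (D F - d) * (b F)\<^sup>2\<bar>"
    by (simp add: sum_distrib_left left_diff_distrib sum_subtractf)
  also have "\<dots> \<le> (\<Sum>F\<in>subsets_card V k. \<bar>D F - d\<bar> * (b F)\<^sup>2)"
    using sum_abs[of "\<lambda>F. (D F - d) * (b F)\<^sup>2"] by (simp add: abs_mult)
  also have "\<dots> \<le> real k * f * (\<Sum>F\<in>subsets_card V k. (b F)\<^sup>2)"
    using link by (intro coboundary_weighted_norm_le[OF assms(1-4)]) auto
  finally show ?thesis .
qed

lemma diagonal_cross_term_le:
  assumes "finite V" "k \<ge> 1"
    and b: "\<forall>F\<in>subsets_card V k. b F = full_cobdry g F"
    and dev: "\<forall>G\<in>subsets_card V (k - 1).
      (\<Sum>x\<in>V - G. (D (insert x G) - d)\<^sup>2) \<le> f\<^sup>2 * (real (card V) - real k + 1)"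
    and orth: "(\<Sum>F\<in>subsets_card V k. z F * b F) = 0"
  shows "(\<Sum>F\<in>subsets_card V k. D F * b F * z F)\<^sup>2
       \<le> real k * f\<^sup>2 * (\<Sum>F\<in>subsets_card V k. (b F)\<^sup>2) * (\<Sum>F\<in>subsets_card V k. (z F)\<^sup>2)"
proof -
  have "(\<Sum>F\<in>subsets_card V k. ((D F - d) * b F) * z F)
      = (\<Sum>F\<in>subsets_card V k. D F * b F * z F) - d * (\<Sum>F\<in>subsets_card V k. z F * b F)"
    by (simp add: algebra_simps sum_subtractf sum_distrib_left)
  then have "(\<Sum>F\<in>subsets_card V k. D F * b F * z F)
      = (\<Sum>F\<in>subsets_card V k. ((D F - d) * b F) * z F)"
    using orth by simp
  then have "(\<Sum>F\<in>subsets_card V k. D F * b F * z F)\<^sup>2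
      \<le> (\<Sum>F\<in>subsets_card V k. (D F - d)\<^sup>2 * (b F)\<^sup>2) * (\<Sum>F\<in>subsets_card V k. (z F)\<^sup>2)"
    using Cauchy_Schwarz_ineq_sum[of "\<lambda>F. (D F - d) * b F" z] by (simp add: power_mult_distrib)
  also have "\<dots> \<le> real k * f\<^sup>2 * (\<Sum>F\<in>subsets_card V k. (b F)\<^sup>2) * (\<Sum>F\<in>subsets_card V k. (z F)\<^sup>2)"
    using dev real_card_complement_subsets_card[OF assms(1,2)]
    by (intro mult_right_mono coboundary_weighted_norm_le[OF assms(1,2) _ b])
      (auto simp: sum_nonneg)
  finally show ?thesis .
qed

lemma abs_le_of_square_le_nat_mult:
  fixes x f :: real
  assumes "x\<^sup>2 \<le> real k * f\<^sup>2" "f \<ge> 0"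
  shows "\<bar>x\<bar> \<le> real k * f"
proof (rule power2_le_imp_le)
  have "real k \<le> real k * real k" by (metis of_nat_le_iff of_nat_mult le_square)
  then have "real k * f\<^sup>2 \<le> (real k * f)\<^sup>2"
    by (simp add: power_mult_distrib mult_right_mono flip: power2_eq_square)
  then show "\<bar>x\<bar>\<^sup>2 \<le> (real k * f)\<^sup>2" using assms(1) by simp
qed (use assms in simp)

theorem proposition3p7:
  fixes V :: "'a::linorder set" and X :: "'a set set" and k :: nat and d f :: real
  assumes "simplicial_complex V X"
    and "k \<ge> 1"
    and "complex_dim X k"
    and "complete_skeleton V X k"
    and "d > 0" and "f \<ge> 0"
    and "\<forall>F\<in>faces_card X (k - 1).
           (\<Sum>v\<in>V - F. (real (link_deg V X k F v) - d)\<^sup>2) \<le> f\<^sup>2 * (real (card V) - real k + 1)"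
  shows "(\<forall>b\<in>coboundaries X k. cnorm X k b = 1 \<longrightarrow>
            \<bar>cinner X k (adj_apply X k b) b - d\<bar> \<le> real k * f)
       \<and> (\<forall>b\<in>coboundaries X k. \<forall>z. cnorm X k b = 1 \<and> cnorm X k z = 1
            \<and> (\<forall>c\<in>coboundaries X k. cinner X k z c = 0) \<longrightarrow>
            \<bar>cinner X k (adj_apply X k b) z\<bar> \<le> real k * f)"
proof -
  have finV: "finite V" using assms(1) by (simp add: simplicial_complex_def)
  have faces: "faces_card X k = subsets_card V k" using faces_card_complete[OF assms(1,4)] by simp
  note dev = sum_up_degree_deviation_le[OF assms(1,4,2,7)]
  show ?thesis
  proof (intro conjI ballI allI impI)
    fix b assume b: "b \<in> coboundaries X k" and "cnorm X k b = 1"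
    moreover obtain g where g: "\<forall>F\<in>subsets_card V k. b F = full_cobdry g F"
      using coboundary_obtain_full_potential[OF assms(1,4,2) b] .
    note diagonal_deviation_le[OF finV assms(2,6) g dev]
    ultimately show "\<bar>cinner X k (adj_apply X k b) b - d\<bar> \<le> real k * f"
      unfolding cinner_adj_apply_coboundary[OF assms(1,4,2) g]
      by (simp add: cnorm_def cinner_def faces power2_eq_square mult.assoc)
  next
    fix b z assume b: "b \<in> coboundaries X k" and bz: "cnorm X k b = 1 \<and> cnorm X k z = 1
      \<and> (\<forall>c\<in>coboundaries X k. cinner X k z c = 0)"
    then have "(\<Sum>F\<in>subsets_card V k. z F * b F) = 0" by (simp add: cinner_def faces)
    moreover obtain g where g: "\<forall>F\<in>subsets_card V k. b F = full_cobdry g F"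
      using coboundary_obtain_full_potential[OF assms(1,4,2) b] .
    note diagonal_cross_term_le[OF finV assms(2) g dev, where z = z]
    ultimately have "(cinner X k (adj_apply X k b) z)\<^sup>2 \<le> real k * f\<^sup>2"
      using bz unfolding cinner_adj_apply_coboundary[OF assms(1,4,2) g]
      by (simp add: cnorm_def cinner_def faces power2_eq_square)
    then show "\<bar>cinner X k (adj_apply X k b) z\<bar> \<le> real k * f"
      using assms(6) by (rule abs_le_of_square_le_nat_mult)
  qed
qed

end
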